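(* Let $\mathbf{q}^*\in\mathbb{S}^3$ be a fixed unit quaternion (the attractor) and consider the rotational dynamical system on unit quaternions $$\boldsymbol{\omega} = \mathbf{A}_o\, k_q(\mathbf{q},\mathbf{q}^* )\, \log(\mathbf{q}\otimes\bar{\mathbf{q}}^* ),$$ where $\boldsymbol{\omega}\in\mathbb{R}^3$ is the angular velocity driving $\mathbf{q}(t)$ through the quaternion propagation equation $\dot{\mathbf{q}} = \tfrac12 \tilde{\boldsymbol{\omega}}\otimes\mathbf{q}$ with $\tilde{\boldsymbol{\omega}}=[0,\boldsymbol{\omega}^\top]^\top$, and $\mathbf{A}_o\in\mathbb{R}^{3\times3}$. If $$\mathbf{A}_o=\mathbf{A}_o^\top\prec 0 \quad\text{and}\quad k_q(\mathbf{q},\mathbf{q}^* )=\frac{\|\mathrm{vec}(\mathbf{q}\otimes\bar{\mathbf{q}}^* )\|}{\arccos(\mathrm{scalar}(\mathbf{q}\otimes\bar{\mathbf{q}}^* ))},$$ then this dynamical system is globally asymptotically stable at the attractor $\mathbf{q}^*$, i.e. $\lim_{t\to\infty}\|\log(\mathbf{q}^*\otimes\bar{\mathbf{q}}(t))\|=0$.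
   Context: A unit quaternion is $\mathbf{q}=[s,\boldsymbol{u}^\top]^\top\in\mathbb{S}^3\subset\mathbb{R}^4$ with scalar part $\mathrm{scalar}(\mathbf{q})=s\in\mathbb{R}$ and vector part $\mathrm{vec}(\mathbf{q})=\boldsymbol{u}\in\mathbb{R}^3$. The conjugate is $\bar{\mathbf{q}}=[s,-\boldsymbol{u}^\top]^\top$. The quaternion product is $\mathbf{q}_1\otimes\mathbf{q}_2=[s_1s_2-\boldsymbol{u}_1^\top\boldsymbol{u}_2,\ (s_1\boldsymbol{u}_2+s_2\boldsymbol{u}_1+\mathbf{S}(\boldsymbol{u}_1)\boldsymbol{u}_2)^\top]^\top$, where $\mathbf{S}(\cdot)$ denotes the $3\times3$ skew-symmetric (cross-product) matrix. The quaternion logarithm $\log:\mathbb{S}^3\to\mathbb{R}^3$ is $\log([s,\boldsymbol{u}^\top]^\top)=\arccos(s)\,\boldsymbol{u}/\|\boldsymbol{u}\|$ if $\|\boldsymbol{u}\|>0$ and $[0,0,0]^\top$ otherwise. The propagation equation $\dot{\mathbf{q}}=\tfrac12\tilde{\boldsymbol{\omega}}\otimes\mathbf{q}$ reads $\dot s=-\tfrac12\boldsymbol{u}^\top\boldsymbol{\omega}$, $\dot{\boldsymbol{u}}=\tfrac12(s\mathbf{I}-\mathbf{S}(\boldsymbol{u}))\boldsymbol{\omega}$. *)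

theory Defs
  imports "HOL-Analysis.Analysis" "HOL-Analysis.Cross3"
begin

type_synonym quat = "real \<times> (real^3)"

definition qscalar :: "quat \<Rightarrow> real" where "qscalar q = fst q"
definition qvec :: "quat \<Rightarrow> real^3" where "qvec q = snd q"

definition unit_quat :: "quat \<Rightarrow> bool" where
  "unit_quat q \<longleftrightarrow> (qscalar q)\<^sup>2 + (norm (qvec q))\<^sup>2 = 1"

definition qconj :: "quat \<Rightarrow> quat" where
  "qconj q = (qscalar q, - qvec q)"

text \<open>Quaternion product; the skew matrix S(u1) applied to u2 is the cross product.\<close>
definition qmult :: "quat \<Rightarrow> quat \<Rightarrow> quat" where
  "qmult q1 q2 = (qscalar q1 * qscalar q2 - qvec q1 \<bullet> qvec q2,
                  qscalar q1 *\<^sub>R qvec q2 + qscalar q2 *\<^sub>R qvec q1 + cross3 (qvec q1) (qvec q2))"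

definition qlog :: "quat \<Rightarrow> real^3" where
  "qlog q = (if norm (qvec q) > 0 then (arccos (qscalar q) / norm (qvec q)) *\<^sub>R qvec q else 0)"

definition qprop :: "real^3 \<Rightarrow> quat \<Rightarrow> quat" where
  "qprop \<omega> q = (1/2) *\<^sub>R qmult (0, \<omega>) q"

definition kq :: "quat \<Rightarrow> quat \<Rightarrow> real" where
  "kq q qs = norm (qvec (qmult q (qconj qs))) / arccos (qscalar (qmult q (qconj qs)))"

definition ds_omega :: "real^3^3 \<Rightarrow> quat \<Rightarrow> quat \<Rightarrow> real^3" where
  "ds_omega A qs q = A *v (kq q qs *\<^sub>R qlog (qmult q (qconj qs)))"

definition neg_def_sym :: "real^3^3 \<Rightarrow> bool" where
  "neg_def_sym A \<longleftrightarrow> transpose A = A \<and> (\<forall>x. x \<noteq> 0 \<longrightarrow> x \<bullet> (A *v x) < 0)"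

end

(*
  Let e = q (x) conj q* be the attitude error. Since q* (x) conj q = conj e and
  log (conj e) = - log e, the quantity to control is norm (log e). Right multiplication by the
  constant conj q* commutes with the propagation equation, so e obeys de/dt = 1/2 omega~ (x) e;
  this flow preserves the norm, hence e stays a unit quaternion. On unit quaternions the gain k_q
  cancels the factor arccos(s)/|u| of the logarithm, so omega = A_o vec e, and the scalar part s
  of e satisfies
    ds/dt = -1/2 (vec e)^T A_o (vec e) >= lambda/2 |vec e|^2 = lambda/2 (1 - s^2)
  with lambda > 0 from negative definiteness. So s is nondecreasing and, unless it stays at -1,
  is driven to 1, whence norm (log e) <= arccos s tends to 0.
*)
theory Submission
  imports Defs
begin

lemma qscalar_Pair [simp]: "qscalar (a, v) = a"
  by (simp add: qscalar_def)

lemma qvec_Pair [simp]: "qvec (a, v) = v"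
  by (simp add: qvec_def)

lemma qconj_Pair [simp]: "qconj (a, v) = (a, - v)"
  by (simp add: qconj_def)

lemma qmult_Pair: "qmult (a, v) (b, u) = (a * b - v \<bullet> u, a *\<^sub>R u + b *\<^sub>R v + cross3 v u)"
  by (simp add: qmult_def)

lemma qmult_assoc: "qmult (qmult p q) r = qmult p (qmult q r)"
proof -
  obtain a v b u c w where "p = (a, v)" "q = (b, u)" "r = (c, w)"
    by (cases p, cases q, cases r)
  then show ?thesis
    by (simp add: qmult_Pair) (simp add: cross3_simps forall_3)
qed

lemma power2_norm_quat: "(norm q)\<^sup>2 = (qscalar q)\<^sup>2 + (norm (qvec q))\<^sup>2"
  by (cases q) (simp add: norm_prod_def)

lemma unit_quat_iff_norm: "unit_quat q \<longleftrightarrow> norm q = 1"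
  by (metis norm_ge_zero power2_norm_quat power2_eq_imp_eq one_power2 unit_quat_def zero_le_one)

lemma norm_qmult: "norm (qmult p q) = norm p * norm q"
proof -
  obtain a v b u where pq: "p = (a, v)" "q = (b, u)"
    by (cases p, cases q)
  have "orthogonal (a *\<^sub>R u + b *\<^sub>R v) (cross3 v u)"
    by (simp add: orthogonal_def inner_add_left dot_cross_self)
  then have "(norm (qmult p q))\<^sup>2
      = (a * b - v \<bullet> u)\<^sup>2 + (norm (a *\<^sub>R u + b *\<^sub>R v))\<^sup>2 + (norm (cross3 v u))\<^sup>2"
    by (simp add: pq qmult_Pair power2_norm_quat norm_add_Pythagorean)
  also have "(norm (a *\<^sub>R u + b *\<^sub>R v))\<^sup>2 = a\<^sup>2 * (norm u)\<^sup>2 + 2 * a * b * (v \<bullet> u) + b\<^sup>2 * (norm v)\<^sup>2"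
    unfolding power2_norm_eq_inner
    by (simp add: inner_add_left inner_add_right inner_commute[of u v] power2_eq_square algebra_simps)
  also have "(norm (cross3 v u))\<^sup>2 = (norm v)\<^sup>2 * (norm u)\<^sup>2 - (v \<bullet> u)\<^sup>2"
    using norm_cross_dot[of v u] by (simp add: power_mult_distrib)
  also have "(a * b - v \<bullet> u)\<^sup>2 + (a\<^sup>2 * (norm u)\<^sup>2 + 2 * a * b * (v \<bullet> u) + b\<^sup>2 * (norm v)\<^sup>2)
      + ((norm v)\<^sup>2 * (norm u)\<^sup>2 - (v \<bullet> u)\<^sup>2) = (norm p * norm q)\<^sup>2"
    unfolding power_mult_distrib power2_norm_quat by (simp add: pq power2_eq_square algebra_simps)
  finally show ?thesis
    by (simp add: power2_eq_imp_eq)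
qed

lemma qconj_qmult: "qconj (qmult p q) = qmult (qconj q) (qconj p)"
proof -
  obtain a v b u where "p = (a, v)" "q = (b, u)"
    by (cases p, cases q)
  then show ?thesis
    by (simp add: qmult_Pair inner_commute cross_skew[of u v])
qed

lemma norm_qconj [simp]: "norm (qconj q) = norm q"
  by (cases q) (simp add: norm_prod_def)

lemma qconj_qconj [simp]: "qconj (qconj q) = q"
  by (simp add: qconj_def qscalar_def qvec_def)

lemma qlog_qconj: "qlog (qconj q) = - qlog q"
  by (simp add: qlog_def qconj_def qscalar_def qvec_def)

lemma linear_qmult_left: "linear (\<lambda>p. qmult p r)"
  by (rule linearI) (simp_all add: qmult_def qscalar_def qvec_def inner_add_left cross_add_left
      cross_mult_left algebra_simps)

lemma qmult_qprop: "qmult (qprop \<omega> p) r = qprop \<omega> (qmult p r)"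
  by (simp add: qprop_def qmult_assoc linear_scale[OF linear_qmult_left])

lemma inner_qprop_self: "p \<bullet> qprop \<omega> p = 0"
  by (cases p) (simp add: qprop_def qmult_Pair inner_Pair dot_cross_self inner_commute algebra_simps)

lemma qscalar_qprop: "qscalar (qprop \<omega> p) = - (\<omega> \<bullet> qvec p) / 2"
  by (simp add: qprop_def qmult_def qscalar_def)

lemma has_vector_derivative_qmult_left:
  "(p has_vector_derivative p') F \<Longrightarrow> ((\<lambda>t. qmult (p t) r) has_vector_derivative qmult p' r) F"
  using linear_qmult_left unfolding linear_conv_bounded_linear
  by (rule bounded_linear.has_vector_derivative)

lemma has_real_derivative_qscalar:
  "(p has_vector_derivative p') F \<Longrightarrow> ((\<lambda>t. qscalar (p t)) has_real_derivative qscalar p') F"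
  unfolding qscalar_def has_real_derivative_iff_has_vector_derivative
  by (rule bounded_linear.has_vector_derivative[OF bounded_linear_fst])

lemma DERIV_ge_imp_diff_ge:
  fixes f :: "real \<Rightarrow> real"
  assumes "x \<le> y" "{x..y} \<subseteq> S"
    and "\<And>t. x \<le> t \<Longrightarrow> t \<le> y \<Longrightarrow> (f has_real_derivative f' t) (at t within S)"
    and "\<And>t. x \<le> t \<Longrightarrow> t \<le> y \<Longrightarrow> r \<le> f' t"
  shows "r * (y - x) \<le> f y - f x"
proof -
  have "\<exists>\<xi>\<in>{x..y}. f y - f x = f' \<xi> * (y - x)"
  proof (rule mvt_very_simple[OF \<open>x \<le> y\<close>])
    fix t assume "x \<le> t" "t \<le> y"
    with assms(2,3) have "(f has_real_derivative f' t) (at t within {x..y})"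
      by (blast intro: DERIV_subset)
    then show "(f has_derivative (\<lambda>h. f' t * h)) (at t within {x..y})"
      by (simp add: has_field_derivative_def)
  qed
  then obtain \<xi> where "x \<le> \<xi>" "\<xi> \<le> y" "f y - f x = f' \<xi> * (y - x)"
    by auto
  with assms(1,4) show ?thesis
    by (simp add: mult_right_mono)
qed

lemma qprop_solution_norm_const:
  assumes deriv: "\<And>t. 0 \<le> t \<Longrightarrow> (p has_vector_derivative qprop (\<omega> t) (p t)) (at t within {0..})"
    and "0 \<le> t"
  shows "norm (p t) = norm (p 0)"
proof -
  have "((\<lambda>t. p t \<bullet> p t) has_real_derivative 0) (at t within {0..})" if "0 \<le> t" for t
  proof -
    have "((\<lambda>t. p t \<bullet> p t) has_vector_derivative
        p t \<bullet> qprop (\<omega> t) (p t) + qprop (\<omega> t) (p t) \<bullet> p t) (at t within {0..})"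
      by (rule bounded_bilinear.has_vector_derivative[OF bounded_bilinear_inner deriv[OF that] deriv[OF that]])
    then show ?thesis
      by (simp add: has_real_derivative_iff_has_vector_derivative inner_qprop_self inner_commute)
  qed
  then have "p t \<bullet> p t = p 0 \<bullet> p 0"
    using DERIV_ge_imp_diff_ge[of 0 t "{0..}" "\<lambda>t. p t \<bullet> p t" "\<lambda>_. 0" 0]
      DERIV_ge_imp_diff_ge[of 0 t "{0..}" "\<lambda>t. - (p t \<bullet> p t)" "\<lambda>_. 0" 0]
      DERIV_minus[of "\<lambda>t. p t \<bullet> p t" 0] \<open>0 \<le> t\<close>
    by auto
  then show ?thesis
    by (simp add: norm_eq_sqrt_inner)
qed

lemma quadratic_form_neg_def_bound:
  fixes A :: "real^'n^'n"
  assumes neg_def: "\<And>x. x \<noteq> 0 \<Longrightarrow> x \<bullet> (A *v x) < 0"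
  obtains c where "0 < c" "\<And>x. c * (norm x)\<^sup>2 \<le> - (x \<bullet> (A *v x))"
proof -
  have "continuous_on (sphere 0 1) (\<lambda>x. - (x \<bullet> (A *v x)))"
    by (intro continuous_intros linear_continuous_on) simp
  moreover have "sphere (0 :: real^'n) 1 \<noteq> {}"
    by simp
  ultimately obtain x0 where x0: "x0 \<in> sphere 0 1"
    and min: "\<And>y. y \<in> sphere 0 1 \<Longrightarrow> - (x0 \<bullet> (A *v x0)) \<le> - (y \<bullet> (A *v y))"
    using continuous_attains_inf[OF compact_sphere] by blast
  define c where "c = - (x0 \<bullet> (A *v x0))"
  have "x0 \<noteq> 0"
    using x0 by auto
  then have "0 < c"
    using neg_def[of x0] by (simp add: c_def)
  moreover have "c * (norm x)\<^sup>2 \<le> - (x \<bullet> (A *v x))" for x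
  proof (cases "x = 0")
    case False
    then have "c \<le> - ((x /\<^sub>R norm x) \<bullet> (A *v (x /\<^sub>R norm x)))"
      using min[of "x /\<^sub>R norm x"] by (simp add: c_def)
    also have "\<dots> = - (x \<bullet> (A *v x)) / (norm x)\<^sup>2"
      by (simp add: matrix_vector_mult_scaleR power2_eq_square divide_inverse)
    finally show ?thesis
      using False by (simp add: field_simps)
  qed simp
  ultimately show ?thesis
    using that by blast
qed

lemma tendsto_1_of_deriv_ge_logistic:
  fixes s s' :: "real \<Rightarrow> real"
  assumes deriv: "\<And>t. 0 \<le> t \<Longrightarrow> (s has_real_derivative s' t) (at t within {0..})"
    and bounded: "\<And>t. 0 \<le> t \<Longrightarrow> \<bar>s t\<bar> \<le> 1"
    and growth: "\<And>t. 0 \<le> t \<Longrightarrow> c * (1 - (s t)\<^sup>2) \<le> s' t"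
    and "0 < c" "0 \<le> T" "-1 < s T"
  shows "(s \<longlongrightarrow> 1) at_top"
proof (rule order_tendstoI)
  have increment: "r * (y - x) \<le> s y - s x"
    if "0 \<le> x" "x \<le> y" "\<And>t. x \<le> t \<Longrightarrow> t \<le> y \<Longrightarrow> r \<le> s' t" for x y r
    using DERIV_ge_imp_diff_ge[of x y "{0..}" s s' r] that deriv by auto
  have mono: "s x \<le> s y" if "0 \<le> x" "x \<le> y" for x y
  proof -
    have "0 \<le> s' t" if "0 \<le> t" for t
    proof -
      have "0 \<le> c * (1 - (s t)\<^sup>2)"
        using bounded[OF that] \<open>0 < c\<close> by (simp add: abs_square_le_1)
      then show ?thesis
        using growth[OF that] by linarith
    qed
    then show ?thesis
      using increment[of x y 0] that by auto
  qed
  fix b :: real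
  assume "b < 1"
  have "\<exists>t\<ge>T. b < s t"
  proof (rule ccontr)
    assume "\<not> ?thesis"
    then have below: "s t \<le> b" if "T \<le> t" for t
      using that by force
    define r where "r = c * (1 - b) * (1 + s T)"
    have "0 < r"
      using \<open>0 < c\<close> \<open>b < 1\<close> \<open>-1 < s T\<close> by (simp add: r_def)
    have "r \<le> s' t" if "T \<le> t" for t
    proof -
      have "r \<le> c * ((1 - s t) * (1 + s t))"
        unfolding r_def mult.assoc
        using \<open>0 < c\<close> \<open>b < 1\<close> \<open>-1 < s T\<close> below[OF that] mono[OF \<open>0 \<le> T\<close> that]
        by (intro mult_left_mono mult_mono) auto
      also have "\<dots> \<le> s' t"
        using growth[of t] \<open>0 \<le> T\<close> that by (simp add: power2_eq_square algebra_simps)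
      finally show ?thesis .
    qed
    then have "r * (3 / r) \<le> s (T + 3 / r) - s T"
      using increment[of T "T + 3 / r" r] \<open>0 \<le> T\<close> \<open>0 < r\<close> by auto
    moreover have "\<bar>s (T + 3 / r)\<bar> \<le> 1" "\<bar>s T\<bar> \<le> 1"
      using bounded \<open>0 \<le> T\<close> \<open>0 < r\<close> by simp_all
    ultimately show False
      using \<open>0 < r\<close> by simp
  qed
  then obtain t1 where "T \<le> t1" "b < s t1"
    by blast
  then have "b < s t" if "t1 \<le> t" for t
    using mono[of t1 t] that \<open>0 \<le> T\<close> by simp
  then show "\<forall>\<^sub>F t in at_top. b < s t"
    unfolding eventually_at_top_linorder by blast
next
  fix b :: real
  assume "1 < b"
  then have "s t < b" if "0 \<le> t" for t
    using bounded[OF that] by simp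
  then show "\<forall>\<^sub>F t in at_top. s t < b"
    unfolding eventually_at_top_linorder by blast
qed

lemma unit_quat_power2_norm_qvec: "unit_quat q \<Longrightarrow> (norm (qvec q))\<^sup>2 = 1 - (qscalar q)\<^sup>2"
  by (simp add: unit_quat_def)

lemma unit_quat_abs_qscalar_le:
  assumes "unit_quat q"
  shows "\<bar>qscalar q\<bar> \<le> 1"
proof -
  have "(qscalar q)\<^sup>2 \<le> 1"
    using assms zero_le_power2[of "norm (qvec q)"] unfolding unit_quat_def by linarith
  then show ?thesis
    by (simp add: abs_square_le_1)
qed

lemma norm_qlog_le_arccos:
  assumes "unit_quat q"
  shows "norm (qlog q) \<le> arccos (qscalar q)"
proof -
  have "0 \<le> arccos (qscalar q)"
    using unit_quat_abs_qscalar_le[OF assms] by (simp add: arccos_lbound abs_le_iff)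
  then show ?thesis
    by (simp add: qlog_def)
qed

lemma unit_quat_scaled_qlog_eq_qvec:
  assumes "unit_quat q"
  shows "(norm (qvec q) / arccos (qscalar q)) *\<^sub>R qlog q = qvec q"
proof (cases "qvec q = 0")
  case False
  have "qscalar q \<noteq> 1"
  proof
    assume "qscalar q = 1"
    then have "(norm (qvec q))\<^sup>2 = 0"
      using unit_quat_power2_norm_qvec[OF assms] by simp
    with False show False
      by simp
  qed
  then have "arccos (qscalar q) \<noteq> 0"
    using unit_quat_abs_qscalar_le[OF assms] by (simp add: arccos_eq_0_iff abs_le_iff)
  with False show ?thesis
    by (simp add: qlog_def)
qed (simp add: qlog_def)

lemma ds_omega_eq_qvec_error:
  "unit_quat (qmult q (qconj qs)) \<Longrightarrow> ds_omega A qs q = A *v qvec (qmult q (qconj qs))"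
  by (simp add: ds_omega_def kq_def unit_quat_scaled_qlog_eq_qvec)

lemma attitude_error_dynamics:
  assumes "unit_quat qs" "unit_quat (q 0)"
    and deriv: "\<And>t. 0 \<le> t \<Longrightarrow>
           (q has_vector_derivative qprop (ds_omega A qs (q t)) (q t)) (at t within {0..})"
    and "0 \<le> t"
  defines "e \<equiv> \<lambda>t. qmult (q t) (qconj qs)"
  shows "unit_quat (e t)"
    and "(e has_vector_derivative qprop (A *v qvec (e t)) (e t)) (at t within {0..})"
proof -
  have e_deriv: "(e has_vector_derivative qprop (ds_omega A qs (q t)) (e t)) (at t within {0..})"
    if "0 \<le> t" for t
    using has_vector_derivative_qmult_left[OF deriv[OF that]] by (simp add: e_def qmult_qprop)
  have "norm (e t) = norm (e 0)"
    using qprop_solution_norm_const[OF e_deriv \<open>0 \<le> t\<close>] .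
  also have "\<dots> = 1"
    using assms(1,2) by (simp add: e_def norm_qmult unit_quat_iff_norm)
  finally show unit: "unit_quat (e t)"
    by (simp add: unit_quat_iff_norm)
  show "(e has_vector_derivative qprop (A *v qvec (e t)) (e t)) (at t within {0..})"
    using e_deriv[OF \<open>0 \<le> t\<close>] unit by (simp add: e_def ds_omega_eq_qvec_error)
qed

(* The alternative s = -1 is the antipodal representative e = -1 of the identity rotation, an
   equilibrium of the flow; its logarithm is 0 because log is taken to be 0 when vec e = 0. *)
lemma tendsto_norm_qlog_zero:
  fixes e :: "real \<Rightarrow> quat"
  assumes "\<And>t. 0 \<le> t \<Longrightarrow> unit_quat (e t)"
    and "((\<lambda>t. qscalar (e t)) \<longlongrightarrow> 1) at_top \<or> (\<forall>t\<ge>0. qscalar (e t) = -1)"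
  shows "((\<lambda>t. norm (qlog (e t))) \<longlongrightarrow> 0) at_top"
  using assms(2)
proof
  assume scalar_lim: "((\<lambda>t. qscalar (e t)) \<longlongrightarrow> 1) at_top"
  have "qscalar (e t) \<in> {-1..1}" if "0 \<le> t" for t
    using unit_quat_abs_qscalar_le[OF assms(1)[OF that]] by (simp add: abs_le_iff)
  then have "\<forall>\<^sub>F t in at_top. qscalar (e t) \<in> {-1..1}"
    by (rule eventually_at_top_linorderI)
  then have "((\<lambda>t. arccos (qscalar (e t))) \<longlongrightarrow> 0) at_top"
    using continuous_on_tendsto_compose[OF continuous_on_arccos' scalar_lim] by simp
  moreover have "norm (norm (qlog (e t))) \<le> arccos (qscalar (e t))" if "0 \<le> t" for t
    using norm_qlog_le_arccos[OF assms(1)[OF that]] by simp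
  then have "\<forall>\<^sub>F t in at_top. norm (norm (qlog (e t))) \<le> arccos (qscalar (e t))"
    by (rule eventually_at_top_linorderI)
  ultimately show ?thesis
    by (rule Lim_null_comparison[rotated])
next
  assume "\<forall>t\<ge>0. qscalar (e t) = -1"
  then have "norm (qlog (e t)) = 0" if "0 \<le> t" for t
    using unit_quat_power2_norm_qvec[OF assms(1)[OF that]] that by (simp add: qlog_def)
  then have "\<forall>\<^sub>F t in at_top. norm (qlog (e t)) = 0"
    by (rule eventually_at_top_linorderI)
  then show ?thesis
    by (rule tendsto_eventually)
qed

lemma qscalar_tendsto_1_or_antipodal:
  fixes e :: "real \<Rightarrow> quat" and A :: "real^3^3"
  assumes neg_def: "\<And>x. x \<noteq> 0 \<Longrightarrow> x \<bullet> (A *v x) < 0"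
    and unit: "\<And>t. 0 \<le> t \<Longrightarrow> unit_quat (e t)"
    and e_deriv: "\<And>t. 0 \<le> t \<Longrightarrow>
           (e has_vector_derivative qprop (A *v qvec (e t)) (e t)) (at t within {0..})"
  shows "((\<lambda>t. qscalar (e t)) \<longlongrightarrow> 1) at_top \<or> (\<forall>t\<ge>0. qscalar (e t) = -1)"
proof (rule disjCI)
  assume "\<not> (\<forall>t\<ge>0. qscalar (e t) = -1)"
  then obtain T where "0 \<le> T" "qscalar (e T) \<noteq> -1"
    by blast
  obtain c where "0 < c" and c: "\<And>x. c * (norm x)\<^sup>2 \<le> - (x \<bullet> (A *v x))"
    using quadratic_form_neg_def_bound neg_def by blast
  have bounded: "\<bar>qscalar (e t)\<bar> \<le> 1" if "0 \<le> t" for t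
    using unit[OF that] by (rule unit_quat_abs_qscalar_le)
  have deriv: "((\<lambda>t. qscalar (e t)) has_real_derivative - (qvec (e t) \<bullet> (A *v qvec (e t))) / 2)
      (at t within {0..})" if "0 \<le> t" for t
    using has_real_derivative_qscalar[OF e_deriv[OF that]] by (simp add: qscalar_qprop inner_commute)
  have growth: "c / 2 * (1 - (qscalar (e t))\<^sup>2) \<le> - (qvec (e t) \<bullet> (A *v qvec (e t))) / 2"
    if "0 \<le> t" for t
    using c[of "qvec (e t)"] unit_quat_power2_norm_qvec[OF unit[OF that]] by simp
  have "-1 < qscalar (e T)"
    using bounded[OF \<open>0 \<le> T\<close>] \<open>qscalar (e T) \<noteq> -1\<close> by (simp add: abs_le_iff)
  with \<open>0 < c\<close> \<open>0 \<le> T\<close> show "((\<lambda>t. qscalar (e t)) \<longlongrightarrow> 1) at_top"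
    by (intro tendsto_1_of_deriv_ge_logistic[OF deriv bounded growth]) simp_all
qed

theorem theorem5:
  fixes A :: "real^3^3" and qs :: quat and q :: "real \<Rightarrow> quat"
  assumes "unit_quat qs"
    and "neg_def_sym A"
    and "unit_quat (q 0)"
    and "\<And>t. t \<ge> 0 \<Longrightarrow>
           (q has_vector_derivative qprop (ds_omega A qs (q t)) (q t)) (at t within {0..})"
  shows "((\<lambda>t. norm (qlog (qmult qs (qconj (q t))))) \<longlongrightarrow> 0) at_top"
proof -
  define e where "e t = qmult (q t) (qconj qs)" for t
  have unit: "unit_quat (e t)"
    and e_deriv: "(e has_vector_derivative qprop (A *v qvec (e t)) (e t)) (at t within {0..})"
    if "0 \<le> t" for t
    using attitude_error_dynamics[OF assms(1,3,4) that] by (simp_all add: e_def[abs_def])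
  \<comment> \<open>only the definiteness of A is needed, not its symmetry\<close>
  have "\<And>x. x \<noteq> 0 \<Longrightarrow> x \<bullet> (A *v x) < 0"
    using assms(2) by (simp add: neg_def_sym_def)
  then have "((\<lambda>t. qscalar (e t)) \<longlongrightarrow> 1) at_top \<or> (\<forall>t\<ge>0. qscalar (e t) = -1)"
    using unit e_deriv by (rule qscalar_tendsto_1_or_antipodal)
  then have "((\<lambda>t. norm (qlog (e t))) \<longlongrightarrow> 0) at_top"
    using tendsto_norm_qlog_zero[of e] unit by blast
  moreover have "qmult qs (qconj (q t)) = qconj (e t)" for t
    by (simp add: e_def qconj_qmult)
  ultimately show ?thesis
    by (simp add: qlog_qconj)
qed

end
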